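(* With $I_i'$ ($i=1,\dots,M$) as follows: base stations $\mathcal{M}=\{1,\dots,M\}$, test points $\mathcal{N}=\{1,\dots,N\}$, $d_j>0$, $X=(x_{i,j})\in\{0,1\}^{M\times N}$ with every row containing at least one $1$, $g_{i,j}\ge0$ with $g_{i,j}>0$ whenever $x_{i,j}=1$, $P_i>0$, $\sigma^2>0$, $K,B,\eta,\bar\omega>0$, $\omega_{i,j}(\boldsymbol{\rho})=B\log_2\!\big(1+\frac{P_i g_{i,j}}{\eta(\sum_{l\ne i}P_l g_{l,j}\rho_l+\sigma^2)}\big)$ and $I_i'(\boldsymbol{\rho})=\sum_{j:\,x_{i,j}=1}\max\{d_j/(K\omega_{i,j}(\boldsymbol{\rho})),\,d_j/(K\bar\omega)\}$, define $I_i''(\boldsymbol{\rho})=\min\{I_i'(\boldsymbol{\rho}),1\}$ and $\mathcal{J}''=[I_1'',\dots,I_M'']^T:\mathbb{R}_+^M\to\mathbb{R}_{++}^M$. Then $\mathcal{J}''$ is a standard interference mapping satisfying $\mathcal{J}''(\boldsymbol{\rho})\le\mathbf{1}$ for all $\boldsymbol{\rho}\in\mathbb{R}_+^M$, and $\mathcal{J}''$ has a unique fixed point $\boldsymbol{\rho}^\star\in\mathbb{R}_+^M$ (i.e. $\boldsymbol{\rho}^\star=\mathcal{J}''(\boldsymbol{\rho}^\star)$), which lies in $(0,1]^M$.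
   Context: $\mathbb{R}_+$ denotes the nonnegative reals and $\mathbb{R}_{++}$ the strictly positive reals; $\mathbf{1}$ is the all-ones vector; vector inequalities are componentwise. A function $I:\mathbb{R}_+^M\to\mathbb{R}_{++}$ is called a standard interference function if it satisfies scalability ($\alpha I(\mathbf{x})>I(\alpha\mathbf{x})$ for all $\mathbf{x}\in\mathbb{R}_+^M$, $\alpha>1$) and monotonicity ($I(\mathbf{x}_1)\ge I(\mathbf{x}_2)$ whenever $\mathbf{x}_1\ge\mathbf{x}_2$). A standard interference mapping is a map $\mathbf{x}\mapsto[I_1(\mathbf{x}),\dots,I_M(\mathbf{x})]^T$ with each $I_i$ a standard interference function. *)

theory Defs
  imports Complex_Main
begin

text \<open>Vectors in R^M are functions from a finite index type 'm (the base stations)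
to real; R_+^M is the set of componentwise nonnegative such functions.\<close>

definition nonneg_vec :: "('m \<Rightarrow> real) \<Rightarrow> bool" where
  "nonneg_vec x \<longleftrightarrow> (\<forall>i. 0 \<le> x i)"

definition standard_interference_function :: "(('m \<Rightarrow> real) \<Rightarrow> real) \<Rightarrow> bool" where
  "standard_interference_function I \<longleftrightarrow>
     (\<forall>x. nonneg_vec x \<longrightarrow> 0 < I x) \<and>
     (\<forall>x (\<alpha>::real). nonneg_vec x \<and> \<alpha> > 1 \<longrightarrow> \<alpha> * I x > I (\<lambda>k. \<alpha> * x k)) \<and>
     (\<forall>x1 x2. nonneg_vec x1 \<and> nonneg_vec x2 \<and> (\<forall>k. x2 k \<le> x1 k) \<longrightarrow> I x2 \<le> I x1)"

definition standard_interference_mapping :: "(('m \<Rightarrow> real) \<Rightarrow> ('m \<Rightarrow> real)) \<Rightarrow> bool" where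
  "standard_interference_mapping J \<longleftrightarrow> (\<forall>i. standard_interference_function (\<lambda>x. J x i))"

definition omega :: "real \<Rightarrow> real \<Rightarrow> real \<Rightarrow> ('m \<Rightarrow> real) \<Rightarrow> ('m \<Rightarrow> 'n \<Rightarrow> real)
    \<Rightarrow> 'm \<Rightarrow> 'n \<Rightarrow> ('m \<Rightarrow> real) \<Rightarrow> real" where
  "omega B \<eta> \<sigma>2 P g i j \<rho> =
     B * log 2 (1 + P i * g i j /
        (\<eta> * ((\<Sum>l\<in>UNIV - {i}. P l * g l j * \<rho> l) + \<sigma>2)))"

text \<open>I'_i(rho); X i j = True encodes x_{i,j} = 1.\<close>

definition I' :: "('m \<Rightarrow> 'n \<Rightarrow> bool) \<Rightarrow> ('n \<Rightarrow> real) \<Rightarrow> real \<Rightarrow> real \<Rightarrow> real \<Rightarrow> real \<Rightarrow> real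
    \<Rightarrow> ('m \<Rightarrow> real) \<Rightarrow> ('m \<Rightarrow> 'n \<Rightarrow> real) \<Rightarrow> 'm \<Rightarrow> ('m \<Rightarrow> real) \<Rightarrow> real" where
  "I' X d K B \<eta> \<omega>bar \<sigma>2 P g i \<rho> =
     (\<Sum>j\<in>{j. X i j}. max (d j / (K * omega B \<eta> \<sigma>2 P g i j \<rho>)) (d j / (K * \<omega>bar)))"

definition I'' :: "('m \<Rightarrow> 'n \<Rightarrow> bool) \<Rightarrow> ('n \<Rightarrow> real) \<Rightarrow> real \<Rightarrow> real \<Rightarrow> real \<Rightarrow> real \<Rightarrow> real
    \<Rightarrow> ('m \<Rightarrow> real) \<Rightarrow> ('m \<Rightarrow> 'n \<Rightarrow> real) \<Rightarrow> 'm \<Rightarrow> ('m \<Rightarrow> real) \<Rightarrow> real" where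
  "I'' X d K B \<eta> \<omega>bar \<sigma>2 P g i \<rho> = min (I' X d K B \<eta> \<omega>bar \<sigma>2 P g i \<rho>) 1"

definition J'' :: "('m \<Rightarrow> 'n \<Rightarrow> bool) \<Rightarrow> ('n \<Rightarrow> real) \<Rightarrow> real \<Rightarrow> real \<Rightarrow> real \<Rightarrow> real \<Rightarrow> real
    \<Rightarrow> ('m \<Rightarrow> real) \<Rightarrow> ('m \<Rightarrow> 'n \<Rightarrow> real) \<Rightarrow> ('m \<Rightarrow> real) \<Rightarrow> ('m \<Rightarrow> real)" where
  "J'' X d K B \<eta> \<omega>bar \<sigma>2 P g \<rho> = (\<lambda>i. I'' X d K B \<eta> \<omega>bar \<sigma>2 P g i \<rho>)"

end

theory Submission
  imports Defs
begin

(* Standard interference functions are closed under several operations: positive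
   constants, multiplication by a positive constant, finite nonempty sums, pointwise
   max and min, and composition s \<mapsto> 1 / ln (1 + c / s) with c > 0 (the last one
   because t \<mapsto> ln (1 + t) is strictly concave and vanishes at 0).  The noise-plus-
   interference term of a link is affine in \<rho> with positive offset, hence standard,
   and d_j / (K \<omega>_{i,j}) is a positive multiple of 1 / ln (1 + SINR); so I'_i and
   I''_i = min I'_i 1 are standard, which is the first claim.  For the fixed point we use two general facts:
   a monotone map of R_+^M into [0,1]^M has a fixed point (the componentwise supremum
   of all sub-fixed points in [0,1]^M), and a standard mapping has at most one
   nonnegative fixed point (Yates' scaling argument).  Positivity of the standard
   mapping and the bound by 1 then place the fixed point in (0,1]^M. *)

lemma standard_interference_functionI:
  assumes "\<And>x. nonneg_vec x \<Longrightarrow> 0 < I x"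
    and "\<And>x \<alpha>. nonneg_vec x \<Longrightarrow> \<alpha> > 1 \<Longrightarrow> I (\<lambda>k. \<alpha> * x k) < \<alpha> * I x"
    and "\<And>x1 x2. nonneg_vec x1 \<Longrightarrow> nonneg_vec x2 \<Longrightarrow> (\<forall>k. x2 k \<le> x1 k) \<Longrightarrow> I x2 \<le> I x1"
  shows "standard_interference_function I"
  using assms unfolding standard_interference_function_def by blast

lemma
  assumes "standard_interference_function I"
  shows standard_pos: "nonneg_vec x \<Longrightarrow> 0 < I x"
    and standard_scal: "nonneg_vec x \<Longrightarrow> \<alpha> > 1 \<Longrightarrow> I (\<lambda>k. \<alpha> * x k) < \<alpha> * I x"
    and standard_mono: "nonneg_vec x1 \<Longrightarrow> nonneg_vec x2 \<Longrightarrow> \<forall>k. x2 k \<le> x1 k \<Longrightarrow> I x2 \<le> I x1"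
  using assms unfolding standard_interference_function_def by blast+

lemma nonneg_vec_scale: "nonneg_vec x \<Longrightarrow> 0 \<le> \<alpha> \<Longrightarrow> nonneg_vec (\<lambda>k. \<alpha> * x k)"
  by (simp add: nonneg_vec_def)

section \<open>Closure properties of standard interference functions\<close>

lemma standard_const: "0 < c \<Longrightarrow> standard_interference_function (\<lambda>_. c)"
  by (rule standard_interference_functionI) auto

lemma standard_cmult:
  assumes "0 < c" "standard_interference_function I"
  shows "standard_interference_function (\<lambda>x. c * I x)"
  using assms by (intro standard_interference_functionI)
    (auto simp: standard_pos standard_mono standard_scal)

text \<open>Sums and pointwise max/min of standard functions are standard, since
  multiplication by \<open>\<alpha> > 1\<close> distributes over them.\<close>

lemma standard_add:
  assumes "standard_interference_function I1" "standard_interference_function I2"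
  shows "standard_interference_function (\<lambda>x. I1 x + I2 x)"
proof (rule standard_interference_functionI)
  fix x :: "'a \<Rightarrow> real" and \<alpha> :: real assume "nonneg_vec x" "\<alpha> > 1"
  thus "I1 (\<lambda>k. \<alpha> * x k) + I2 (\<lambda>k. \<alpha> * x k) < \<alpha> * (I1 x + I2 x)"
    using standard_scal[OF assms(1)] standard_scal[OF assms(2)] by (simp add: distrib_left add_strict_mono)
qed (use assms in \<open>auto simp: standard_pos standard_mono add_pos_pos add_mono\<close>)

lemma standard_sum:
  assumes "finite A" "A \<noteq> {}" "\<forall>j\<in>A. standard_interference_function (f j)"
  shows "standard_interference_function (\<lambda>x. \<Sum>j\<in>A. f j x)"
  using assms by (induction A rule: finite_ne_induct) (auto intro: standard_add)

lemma standard_max: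
  assumes "standard_interference_function I1" "standard_interference_function I2"
  shows "standard_interference_function (\<lambda>x. max (I1 x) (I2 x))"
proof (rule standard_interference_functionI)
  fix x :: "'a \<Rightarrow> real" and \<alpha> :: real assume x: "nonneg_vec x" and \<alpha>: "\<alpha> > 1"
  have "\<alpha> * max (I1 x) (I2 x) = max (\<alpha> * I1 x) (\<alpha> * I2 x)"
    using \<alpha> by (simp add: max_mult_distrib_left)
  thus "max (I1 (\<lambda>k. \<alpha> * x k)) (I2 (\<lambda>k. \<alpha> * x k)) < \<alpha> * max (I1 x) (I2 x)"
    using standard_scal[OF assms(1) x \<alpha>] standard_scal[OF assms(2) x \<alpha>] by linarith
next
  fix x :: "'a \<Rightarrow> real" assume "nonneg_vec x"
  thus "0 < max (I1 x) (I2 x)" using standard_pos[OF assms(1)] by (simp add: max.strict_coboundedI1)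
next
  fix x1 x2 :: "'a \<Rightarrow> real" assume "nonneg_vec x1" "nonneg_vec x2" "\<forall>k. x2 k \<le> x1 k"
  thus "max (I1 x2) (I2 x2) \<le> max (I1 x1) (I2 x1)"
    by (intro max.mono standard_mono[OF assms(1)] standard_mono[OF assms(2)])
qed

lemma standard_min:
  assumes "standard_interference_function I1" "standard_interference_function I2"
  shows "standard_interference_function (\<lambda>x. min (I1 x) (I2 x))"
proof (rule standard_interference_functionI)
  fix x :: "'a \<Rightarrow> real" and \<alpha> :: real assume x: "nonneg_vec x" and \<alpha>: "\<alpha> > 1"
  have "\<alpha> * min (I1 x) (I2 x) = min (\<alpha> * I1 x) (\<alpha> * I2 x)"
    using \<alpha> by (simp add: min_mult_distrib_left)
  thus "min (I1 (\<lambda>k. \<alpha> * x k)) (I2 (\<lambda>k. \<alpha> * x k)) < \<alpha> * min (I1 x) (I2 x)"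
    using standard_scal[OF assms(1) x \<alpha>] standard_scal[OF assms(2) x \<alpha>] by linarith
next
  fix x :: "'a \<Rightarrow> real" assume "nonneg_vec x"
  thus "0 < min (I1 x) (I2 x)" using standard_pos[OF assms(1)] standard_pos[OF assms(2)] by simp
next
  fix x1 x2 :: "'a \<Rightarrow> real" assume "nonneg_vec x1" "nonneg_vec x2" "\<forall>k. x2 k \<le> x1 k"
  thus "min (I1 x2) (I2 x2) \<le> min (I1 x1) (I2 x1)"
    by (intro min.mono standard_mono[OF assms(1)] standard_mono[OF assms(2)])
qed

text \<open>Interference plus noise: an affine function with nonnegative weights and positive
  offset.  Scalability is strict because the offset is not scaled.\<close>

lemma standard_affine:
  assumes w: "\<forall>l. 0 \<le> w l" and c: "0 < c"
  shows "standard_interference_function (\<lambda>x. (\<Sum>l\<in>A. w l * x l) + c)"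
proof (rule standard_interference_functionI)
  fix x :: "'a \<Rightarrow> real" assume "nonneg_vec x"
  hence "0 \<le> (\<Sum>l\<in>A. w l * x l)" using w by (auto intro!: sum_nonneg simp: nonneg_vec_def)
  thus "0 < (\<Sum>l\<in>A. w l * x l) + c" using c by linarith
next
  fix x :: "'a \<Rightarrow> real" and \<alpha> :: real assume "\<alpha> > 1"
  have "(\<Sum>l\<in>A. w l * (\<alpha> * x l)) = \<alpha> * (\<Sum>l\<in>A. w l * x l)"
    by (simp add: sum_distrib_left ac_simps)
  thus "(\<Sum>l\<in>A. w l * (\<alpha> * x l)) + c < \<alpha> * ((\<Sum>l\<in>A. w l * x l) + c)"
    using \<open>\<alpha> > 1\<close> c by (simp add: distrib_left)
next
  fix x1 x2 :: "'a \<Rightarrow> real" assume "\<forall>k. x2 k \<le> x1 k"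
  thus "(\<Sum>l\<in>A. w l * x2 l) + c \<le> (\<Sum>l\<in>A. w l * x1 l) + c"
    using w by (auto intro!: sum_mono mult_left_mono)
qed

text \<open>Strict concavity of \<open>ln (1 + t)\<close> on \<open>t \<ge> 0\<close>, in the form needed for
  scalability: shrinking the argument by a factor \<open>a < 1\<close> shrinks the value by less.\<close>

lemma ln_one_plus_scale:
  fixes y a :: real
  assumes y: "0 < y" and a: "0 < a" "a < 1"
  shows "a * ln (1 + y) < ln (1 + a * y)"
proof -
  let ?f = "\<lambda>t. ln (1 + a * t) - a * ln (1 + t)"
  have "?f 0 < ?f y"
  proof (rule DERIV_pos_imp_increasing_open[OF y])
    fix x :: real assume x: "0 < x" "x < y"
    have ax: "0 < 1 + a * x" "a * x < x" using x a by (auto intro: add_pos_pos)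
    have "DERIV ?f x :> a / (1 + a * x) - a / (1 + x)"
      using ax x by (auto intro!: derivative_eq_intros)
    moreover have "a / (1 + x) < a / (1 + a * x)"
      using ax a by (intro divide_strict_left_mono) auto
    ultimately show "\<exists>D. DERIV ?f x :> D \<and> 0 < D" by (intro exI[of _ "a / (1 + a * x) - a / (1 + x)"]) simp
  next
    have "\<forall>t\<in>{0..y}. 0 < 1 + a * t \<and> 0 < 1 + t" using a by (auto intro: add_pos_nonneg)
    thus "continuous_on {0..y} ?f"
      by (auto intro!: continuous_intros)
  qed
  thus ?thesis by simp
qed

text \<open>The reciprocal of a Shannon-type rate \<open>ln (1 + c / s)\<close> is increasing in \<open>s\<close> and,
  by \<open>ln_one_plus_scale\<close>, grows less than linearly; composed with a standard \<open>s\<close> it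
  is again standard.\<close>

lemma inv_log_rate_scale:
  fixes c s \<alpha> :: real
  assumes c: "0 < c" and s: "0 < s" and \<alpha>: "\<alpha> > 1"
  shows "1 / ln (1 + c / (\<alpha> * s)) < \<alpha> * (1 / ln (1 + c / s))"
proof -
  have "(1 / \<alpha>) * ln (1 + c / s) < ln (1 + (1 / \<alpha>) * (c / s))"
    using c s \<alpha> by (intro ln_one_plus_scale) auto
  hence "ln (1 + c / s) < \<alpha> * ln (1 + c / (\<alpha> * s))"
    using \<alpha> by (simp add: field_simps)
  moreover have "0 < c / (\<alpha> * s)" using c s \<alpha> by simp
  hence "0 < ln (1 + c / (\<alpha> * s))" by simp
  moreover have "0 < ln (1 + c / s)" using c s by (simp add: add_pos_pos)
  ultimately show ?thesis by (simp add: field_simps)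
qed

lemma inv_log_rate_mono:
  fixes c s1 s2 :: real
  assumes c: "0 < c" and s: "0 < s2" "s2 \<le> s1"
  shows "1 / ln (1 + c / s2) \<le> 1 / ln (1 + c / s1)"
proof -
  have "c / s1 \<le> c / s2" using c s by (intro divide_left_mono) auto
  moreover have "0 < c / s1" using c s by simp
  ultimately show ?thesis by (intro divide_left_mono) auto
qed

lemma standard_inv_log_rate:
  assumes c: "0 < c" and s: "standard_interference_function s"
  shows "standard_interference_function (\<lambda>x. 1 / ln (1 + c / s x))"
proof (rule standard_interference_functionI)
  fix x :: "'a \<Rightarrow> real" assume "nonneg_vec x"
  hence "0 < c / s x" using c standard_pos[OF s] by simp
  thus "0 < 1 / ln (1 + c / s x)" by simp
next
  fix x :: "'a \<Rightarrow> real" and \<alpha> :: real assume x: "nonneg_vec x" and \<alpha>: "\<alpha> > 1"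
  have "nonneg_vec (\<lambda>k. \<alpha> * x k)" using x \<alpha> by (simp add: nonneg_vec_scale)
  hence "1 / ln (1 + c / s (\<lambda>k. \<alpha> * x k)) \<le> 1 / ln (1 + c / (\<alpha> * s x))"
    using c standard_pos[OF s] less_imp_le[OF standard_scal[OF s x \<alpha>]] by (intro inv_log_rate_mono)
  also have "\<dots> < \<alpha> * (1 / ln (1 + c / s x))"
    by (rule inv_log_rate_scale[OF c standard_pos[OF s x] \<alpha>])
  finally show "1 / ln (1 + c / s (\<lambda>k. \<alpha> * x k)) < \<alpha> * (1 / ln (1 + c / s x))" .
next
  fix x1 x2 :: "'a \<Rightarrow> real" assume "nonneg_vec x1" "nonneg_vec x2" "\<forall>k. x2 k \<le> x1 k"
  thus "1 / ln (1 + c / s x2) \<le> 1 / ln (1 + c / s x1)"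
    using c standard_pos[OF s] standard_mono[OF s] by (intro inv_log_rate_mono) auto
qed

lemma load_eq_inv_log_rate:
  "d / (K * omega B \<eta> \<sigma>2 P g i j \<rho>) =
     (d * ln 2 / (K * B)) * (1 / ln (1 + P i * g i j / (\<eta> * ((\<Sum>l\<in>UNIV - {i}. P l * g l j * \<rho> l) + \<sigma>2))))"
  unfolding omega_def log_def by simp

lemma standard_I'':
  fixes X :: "'m \<Rightarrow> 'n::finite \<Rightarrow> bool" and g :: "'m \<Rightarrow> 'n \<Rightarrow> real"
  assumes d_pos: "\<forall>j. 0 < d j" and row: "\<exists>j. X i j"
    and g_nonneg: "\<forall>i j. 0 \<le> g i j" and g_pos: "\<forall>j. X i j \<longrightarrow> 0 < g i j"
    and P_pos: "\<forall>i. 0 < P i" and pos: "0 < \<sigma>2" "0 < K" "0 < B" "0 < \<eta>" "0 < \<omega>bar"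
  shows "standard_interference_function (I'' X d K B \<eta> \<omega>bar \<sigma>2 P g i)"
proof -
  have load: "standard_interference_function (\<lambda>\<rho>. d j / (K * omega B \<eta> \<sigma>2 P g i j \<rho>))"
    if "X i j" for j
  proof -
    have noise: "standard_interference_function (\<lambda>\<rho>. \<eta> * ((\<Sum>l\<in>UNIV - {i}. P l * g l j * \<rho> l) + \<sigma>2))"
      using pos P_pos g_nonneg by (intro standard_cmult[OF _ standard_affine]) (auto simp: less_imp_le)
    have "0 < P i * g i j" "0 < d j * ln 2 / (K * B)" using that d_pos pos P_pos g_pos by auto
    hence "standard_interference_function
        (\<lambda>\<rho>. (d j * ln 2 / (K * B)) * (1 / ln (1 + P i * g i j / (\<eta> * ((\<Sum>l\<in>UNIV - {i}. P l * g l j * \<rho> l) + \<sigma>2)))))"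
      by (intro standard_cmult standard_inv_log_rate noise)
    thus ?thesis by (simp only: load_eq_inv_log_rate)
  qed
  have "standard_interference_function (I' X d K B \<eta> \<omega>bar \<sigma>2 P g i)"
    unfolding I'_def using row d_pos pos
    by (intro standard_sum ballI standard_max[OF load] standard_const) auto
  thus ?thesis
    unfolding I''_def by (intro standard_min standard_const) auto
qed

section \<open>Fixed points\<close>

text \<open>Existence: a monotone self-map of \<open>R_+^M\<close> with values in \<open>[0,1]^M\<close> has a fixed point,
  namely the componentwise supremum of the set of its sub-fixed points in \<open>[0,1]^M\<close>.\<close>

lemma monotone_bounded_fixpoint_exists:
  fixes J :: "('m \<Rightarrow> real) \<Rightarrow> ('m \<Rightarrow> real)"
  assumes mono: "\<And>x1 x2 k. nonneg_vec x1 \<Longrightarrow> nonneg_vec x2 \<Longrightarrow> \<forall>k. x2 k \<le> x1 k \<Longrightarrow> J x2 k \<le> J x1 k"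
    and bnd: "\<And>x k. nonneg_vec x \<Longrightarrow> 0 \<le> J x k \<and> J x k \<le> 1"
  shows "\<exists>\<rho>. nonneg_vec \<rho> \<and> \<rho> = J \<rho>"
proof -
  define A where "A = {\<rho>. (\<forall>k. 0 \<le> \<rho> k \<and> \<rho> k \<le> 1) \<and> (\<forall>k. \<rho> k \<le> J \<rho> k)}"
  define r where "r = (\<lambda>k. Sup ((\<lambda>\<rho>. \<rho> k) ` A))"
  have zero_in: "(\<lambda>_. 0) \<in> A" using bnd[of "\<lambda>_. 0"] by (auto simp: A_def nonneg_vec_def)
  have bdd: "bdd_above ((\<lambda>\<rho>. \<rho> k) ` A)" for k
    by (rule bdd_aboveI[of _ 1]) (auto simp: A_def)
  have upper: "\<rho> k \<le> r k" if "\<rho> \<in> A" for \<rho> k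
    unfolding r_def by (rule cSup_upper) (use that bdd in auto)
  have r_nonneg: "nonneg_vec r" using upper[OF zero_in] by (simp add: nonneg_vec_def)
  have A_nonneg: "nonneg_vec \<rho>" if "\<rho> \<in> A" for \<rho> using that by (simp add: A_def nonneg_vec_def)
  have r_sub: "r k \<le> J r k" for k
    unfolding r_def[THEN fun_cong[where x=k]]
  proof (rule cSup_least)
    show "(\<lambda>\<rho>. \<rho> k) ` A \<noteq> {}" using zero_in by blast
  next
    fix v assume "v \<in> (\<lambda>\<rho>. \<rho> k) ` A"
    then obtain \<rho> where \<rho>: "\<rho> \<in> A" "v = \<rho> k" by blast
    have "\<rho> k \<le> J \<rho> k" using \<rho>(1) by (simp add: A_def)
    also have "\<dots> \<le> J r k" using mono[OF r_nonneg A_nonneg[OF \<rho>(1)]] upper[OF \<rho>(1)] by blast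
    finally show "v \<le> J r k" using \<rho>(2) by simp
  qed
  have "nonneg_vec (J r)" using bnd[OF r_nonneg] by (simp add: nonneg_vec_def)
  hence "J r \<in> A"
    using bnd[OF r_nonneg] mono[OF _ r_nonneg] r_sub by (auto simp: A_def)
  hence "r = J r" using upper r_sub by (intro ext antisym) auto
  thus ?thesis using r_nonneg by blast
qed

text \<open>Uniqueness (Yates): if \<open>\<rho>' \<le> \<alpha> \<rho>\<close> with the least such \<open>\<alpha> > 1\<close>, then at a
  component attaining \<open>\<alpha>\<close> monotonicity and scalability give \<open>\<rho>'_k < \<alpha> \<rho>_k\<close>, a
  contradiction.\<close>

lemma standard_fixpoint_le:
  fixes J :: "('m::finite \<Rightarrow> real) \<Rightarrow> ('m \<Rightarrow> real)"
  assumes std: "standard_interference_mapping J"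
    and fix1: "nonneg_vec \<rho>" "\<rho> = J \<rho>" and fix2: "nonneg_vec \<rho>'" "\<rho>' = J \<rho>'"
  shows "\<rho>' i \<le> \<rho> i"
proof -
  have std_k: "standard_interference_function (\<lambda>x. J x k)" for k
    using std by (simp add: standard_interference_mapping_def)
  have \<rho>_pos: "0 < \<rho> k" for k using standard_pos[OF std_k fix1(1)] fix1(2) by metis
  define \<alpha> where "\<alpha> = Max (range (\<lambda>k. \<rho>' k / \<rho> k))"
  have below: "\<rho>' k \<le> \<alpha> * \<rho> k" for k
  proof -
    have "\<rho>' k / \<rho> k \<le> \<alpha>" unfolding \<alpha>_def by (rule Max_ge) auto
    thus ?thesis using \<rho>_pos[of k] by (simp add: divide_le_eq)
  qed
  have "\<not> \<alpha> > 1"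
  proof
    assume \<alpha>: "\<alpha> > 1"
    have "\<alpha> \<in> range (\<lambda>k. \<rho>' k / \<rho> k)" unfolding \<alpha>_def by (rule Max_in) auto
    then obtain k where "\<rho>' k / \<rho> k = \<alpha>" by auto
    hence k: "\<rho>' k = \<alpha> * \<rho> k" using \<rho>_pos[of k] by (simp add: field_simps)
    have "\<rho>' k = J \<rho>' k" using fix2(2) by metis
    also have "\<dots> \<le> J (\<lambda>k. \<alpha> * \<rho> k) k"
      using \<alpha> below by (intro standard_mono[OF std_k nonneg_vec_scale[OF fix1(1)] fix2(1)]) auto
    also have "\<dots> < \<alpha> * J \<rho> k" using standard_scal[OF std_k fix1(1) \<alpha>] .
    also have "\<dots> = \<rho>' k" using k fix1(2) by metis
    finally show False by simp
  qed
  hence "\<alpha> * \<rho> i \<le> \<rho> i" using \<rho>_pos[of i] by (simp add: mult_le_cancel_right1)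
  thus ?thesis using below[of i] by linarith
qed

lemma standard_bounded_unique_fixpoint:
  fixes J :: "('m::finite \<Rightarrow> real) \<Rightarrow> ('m \<Rightarrow> real)"
  assumes std: "standard_interference_mapping J" and le1: "\<And>x k. nonneg_vec x \<Longrightarrow> J x k \<le> 1"
  shows "(\<exists>!\<rho>. nonneg_vec \<rho> \<and> \<rho> = J \<rho>)
    \<and> (\<forall>\<rho>. nonneg_vec \<rho> \<and> \<rho> = J \<rho> \<longrightarrow> (\<forall>i. 0 < \<rho> i \<and> \<rho> i \<le> 1))"
proof -
  have std_k: "standard_interference_function (\<lambda>x. J x k)" for k
    using std by (simp add: standard_interference_mapping_def)
  obtain r where r: "nonneg_vec r" "r = J r"
    using monotone_bounded_fixpoint_exists[of J] standard_mono[OF std_k] standard_pos[OF std_k] le1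
    by (metis less_imp_le)
  have "s = r" if "nonneg_vec s" "s = J s" for s
    using standard_fixpoint_le[OF std r that] standard_fixpoint_le[OF std that r]
    by (intro ext antisym)
  moreover have "0 < \<rho> i \<and> \<rho> i \<le> 1" if "nonneg_vec \<rho>" "\<rho> = J \<rho>" for \<rho> i
    using standard_pos[OF std_k that(1)] le1[OF that(1)] that(2) by metis
  ultimately show ?thesis using r by blast
qed

theorem mainTheorem4:
  fixes X :: "'m::finite \<Rightarrow> 'n::finite \<Rightarrow> bool"
    and d :: "'n \<Rightarrow> real" and g :: "'m \<Rightarrow> 'n \<Rightarrow> real" and P :: "'m \<Rightarrow> real"
    and \<sigma>2 K B \<eta> \<omega>bar :: real
  assumes d_pos: "\<forall>j. 0 < d j"
    and X_rows: "\<forall>i. \<exists>j. X i j"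
    and g_nonneg: "\<forall>i j. 0 \<le> g i j"
    and g_pos: "\<forall>i j. X i j \<longrightarrow> 0 < g i j"
    and P_pos: "\<forall>i. 0 < P i"
    and \<sigma>2_pos: "0 < \<sigma>2"
    and K_pos: "0 < K" and B_pos: "0 < B" and \<eta>_pos: "0 < \<eta>" and \<omega>bar_pos: "0 < \<omega>bar"
  shows "standard_interference_mapping (J'' X d K B \<eta> \<omega>bar \<sigma>2 P g)
    \<and> (\<forall>\<rho>. nonneg_vec \<rho> \<longrightarrow> (\<forall>i. J'' X d K B \<eta> \<omega>bar \<sigma>2 P g \<rho> i \<le> 1))
    \<and> (\<exists>!\<rho>. nonneg_vec \<rho> \<and> \<rho> = J'' X d K B \<eta> \<omega>bar \<sigma>2 P g \<rho>)
    \<and> (\<forall>\<rho>. nonneg_vec \<rho> \<and> \<rho> = J'' X d K B \<eta> \<omega>bar \<sigma>2 P g \<rho> \<longrightarrow>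
          (\<forall>i. 0 < \<rho> i \<and> \<rho> i \<le> 1))"
proof -
  let ?J = "J'' X d K B \<eta> \<omega>bar \<sigma>2 P g"
  have std: "standard_interference_mapping ?J"
    unfolding standard_interference_mapping_def J''_def
    using assms by (auto intro!: standard_I'')
  have le1: "?J \<rho> i \<le> 1" for \<rho> i by (simp add: J''_def I''_def)
  show ?thesis using std le1 standard_bounded_unique_fixpoint[OF std le1] by blast
qed

end
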